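(* Let $m,n\ge 3$ and let $e$ be any hyperedge of $\mathcal{C}^3_{m,n}$. Then $\mathcal{C}^3_{m,n}-e$ has exactly one negative Seidel eigenvalue, and all its remaining Seidel eigenvalues are positive.
   Context: For a hypergraph $\mathcal{H}$ and distinct vertices $i,j$, the co-degree $c_{ij}$ is the number of hyperedges containing both $i$ and $j$. The Seidel matrix $\mathcal{S}(\mathcal{H})$ has zero diagonal and $(i,j)$-entry $1-2c_{ij}$ for $i\neq j$; its eigenvalues (with multiplicity) are the Seidel eigenvalues of $\mathcal{H}$. The complete $3$-uniform bipartite hypergraph $\mathcal{C}^3_{m,n}=(V_1,V_2,E)$ has vertex set $V_1\sqcup V_2$, $|V_1|=m$, $|V_2|=n$, and $E$ = all $3$-subsets meeting both $V_1$ and $V_2$. For a hyperedge $e$, $\mathcal{H}-e$ denotes the hypergraph with the same vertex set and hyperedge set $E\setminus\{e\}$. *)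

theory Defs
  imports "Jordan_Normal_Form.Char_Poly" "HOL-Computational_Algebra.Polynomial"
begin

text \<open>A hypergraph on the vertex set {0..<N} is given by N and its set of hyperedges
  E (each hyperedge a subset of {0..<N}).\<close>

definition codegree :: "nat set set \<Rightarrow> nat \<Rightarrow> nat \<Rightarrow> nat" where
  "codegree E i j = card {f \<in> E. i \<in> f \<and> j \<in> f}"

definition seidel_matrix :: "nat \<Rightarrow> nat set set \<Rightarrow> real mat" where
  "seidel_matrix N E = mat N N (\<lambda>(i, j). if i = j then 0 else 1 - 2 * real (codegree E i j))"

definition seidel_eigenvalues :: "nat \<Rightarrow> nat set set \<Rightarrow> complex multiset" where
  "seidel_eigenvalues N E = proots (char_poly (map_mat complex_of_real (seidel_matrix N E)))"

definition bip_part1 :: "nat \<Rightarrow> nat \<Rightarrow> nat set" where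
  "bip_part1 m n = {0..<m}"

definition bip_part2 :: "nat \<Rightarrow> nat \<Rightarrow> nat set" where
  "bip_part2 m n = {m..<m+n}"

definition complete_bip3_edges :: "nat \<Rightarrow> nat \<Rightarrow> nat set set" where
  "complete_bip3_edges m n =
     {f. f \<subseteq> bip_part1 m n \<union> bip_part2 m n \<and> card f = 3
         \<and> f \<inter> bip_part1 m n \<noteq> {} \<and> f \<inter> bip_part2 m n \<noteq> {}}"

end

theory Submission
  imports Defs
begin

text \<open>Split the vertices of \<open>C - e\<close> into four classes according to their part and
  whether they lie on \<open>e\<close>. Off the diagonal, the Seidel matrix is constant on the blocks of this
  partition, i.e. it equals \<open>U W U\<^sup>T - D\<close> with \<open>U\<close> the class indicator matrix. Sylvester's
  determinant identity \<open>det (1 + X Y) = det (1 + Y X)\<close> then factors its characteristic polynomial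
  into linear factors \<open>(x + w\<^sub>c\<^sub>c)\<close>, one fewer than the size of each class, times the
  characteristic polynomial of the \<open>4 \<times> 4\<close> quotient matrix. All \<open>w\<^sub>c\<^sub>c\<close> are negative. The
  quotient polynomial is negative at \<open>0\<close>, positive at \<open>2b - 1\<close> and negative at \<open>2a + 2b - 5\<close>,
  where \<open>a\<close> and \<open>b\<close> are the sizes of the parts meeting \<open>e\<close> once and twice; so it has two
  positive roots below \<open>2a + 2b - 5\<close>, and its remaining quadratic factor has negative
  constant term, hence one negative and one positive root.\<close>

lemma det_four_block_one_eq_lower:
  fixes U :: "'a::idom mat"
  assumes U: "U \<in> carrier_mat n k" and V: "V \<in> carrier_mat k n"
  shows "det (four_block_mat (1\<^sub>m n) (-U) V (1\<^sub>m k)) = det (1\<^sub>m k + V * U)"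
proof -
  have VU: "1\<^sub>m k + V * U \<in> carrier_mat k k" using U V by simp
  have "four_block_mat (1\<^sub>m n) (0\<^sub>m n k) V (1\<^sub>m k) * four_block_mat (1\<^sub>m n) (-U) (0\<^sub>m k n) (1\<^sub>m k + V * U)
      = four_block_mat (1\<^sub>m n) (-U) V (1\<^sub>m k)"
    using U V VU by (subst mult_four_block_mat[of _ n n _ k _ k _ _ n _ k]) (auto simp: mult_add_distrib_mat)
  moreover have "det (four_block_mat (1\<^sub>m n) (0\<^sub>m n k) V (1\<^sub>m k)) = 1"
    using V by (subst det_four_block_mat_upper_right_zero[of _ n _ k]) auto
  moreover have "det (four_block_mat (1\<^sub>m n) (-U) (0\<^sub>m k n) (1\<^sub>m k + V * U)) = det (1\<^sub>m k + V * U)"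
    using U VU by (subst det_four_block_mat_lower_left_zero[of _ n _ k]) auto
  ultimately show ?thesis
    using U V VU by (metis det_mult four_block_carrier_mat one_carrier_mat mult_1)
qed

lemma det_four_block_one_eq_upper:
  fixes U :: "'a::idom mat"
  assumes U: "U \<in> carrier_mat n k" and V: "V \<in> carrier_mat k n"
  shows "det (four_block_mat (1\<^sub>m n) (-U) V (1\<^sub>m k)) = det (1\<^sub>m n + U * V)"
proof -
  have UV: "1\<^sub>m n + U * V \<in> carrier_mat n n" using U V by simp
  have "four_block_mat (1\<^sub>m n + U * V) (-U) (0\<^sub>m k n) (1\<^sub>m k) * four_block_mat (1\<^sub>m n) (0\<^sub>m n k) V (1\<^sub>m k)
      = four_block_mat (1\<^sub>m n) (-U) V (1\<^sub>m k)"
    using U V UV by (subst mult_four_block_mat[of _ n n _ k _ k _ _ n _ k]) (auto simp: add_mult_distrib_mat)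
  moreover have "det (four_block_mat (1\<^sub>m n) (0\<^sub>m n k) V (1\<^sub>m k)) = 1"
    using V by (subst det_four_block_mat_upper_right_zero[of _ n _ k]) auto
  moreover have "det (four_block_mat (1\<^sub>m n + U * V) (-U) (0\<^sub>m k n) (1\<^sub>m k)) = det (1\<^sub>m n + U * V)"
    using U UV by (subst det_four_block_mat_lower_left_zero[of _ n _ k]) auto
  ultimately show ?thesis
    using U V UV by (metis det_mult four_block_carrier_mat one_carrier_mat mult_1 mult.commute)
qed

lemma det_one_plus_mult_commute:
  fixes U :: "'a::idom mat"
  assumes "U \<in> carrier_mat n k" and "V \<in> carrier_mat k n"
  shows "det (1\<^sub>m n + U * V) = det (1\<^sub>m k + V * U)"
  using det_four_block_one_eq_lower[OF assms] det_four_block_one_eq_upper[OF assms] by simp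

lemma det_mat_diag: "det (mat_diag n f) = (\<Prod>i<n. f i)"
proof -
  have "upper_triangular (mat_diag n f)" unfolding mat_diag_def upper_triangular_def by auto
  then have "det (mat_diag n f) = prod_list (map f [0..<n])"
    by (subst det_upper_triangular[of _ n]) (auto simp: diag_mat_def mat_diag_def intro!: arg_cong[of _ _ prod_list])
  then show ?thesis by (simp add: prod.distinct_set_conv_list[symmetric] atLeast0LessThan)
qed

definition class_mat :: "nat \<Rightarrow> (nat \<Rightarrow> nat) \<Rightarrow> (nat \<Rightarrow> nat \<Rightarrow> 'a::zero) \<Rightarrow> 'a mat" where
  "class_mat N cls w = mat N N (\<lambda>(i, j). if i = j then 0 else w (cls i) (cls j))"

definition class_size :: "nat \<Rightarrow> (nat \<Rightarrow> nat) \<Rightarrow> nat \<Rightarrow> nat" where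
  "class_size N cls c = card {i. i < N \<and> cls i = c}"

text \<open>If \<open>s d\<close> is the size of class \<open>d\<close>, entry \<open>(c, d)\<close> is the sum of the class-\<open>d\<close> entries in a
  row of class \<open>c\<close> of \<open>class_mat N cls w\<close>; the correction accounts for its zero diagonal.\<close>

definition quotient_mat :: "nat \<Rightarrow> (nat \<Rightarrow> 'a) \<Rightarrow> (nat \<Rightarrow> nat \<Rightarrow> 'a::ring) \<Rightarrow> 'a mat" where
  "quotient_mat k s w = mat k k (\<lambda>(c, d). w c d * s d - (if c = d then w c c else 0))"

lemma sum_class_indicator:
  fixes a :: "'a::semiring_1"
  shows "(\<Sum>i<N. if cls i = d then a else 0) = of_nat (class_size N cls d) * a"
proof -
  have "(\<Sum>i<N. if cls i = d then a else 0) = (\<Sum>i\<in>{i. i < N \<and> cls i = d}. a)"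
    by (subst sum.inter_filter[symmetric]) (auto intro!: sum.cong)
  then show ?thesis by (simp add: class_size_def)
qed

lemma class_mat_factorization:
  fixes w :: "nat \<Rightarrow> nat \<Rightarrow> 'a::field"
  assumes cls: "\<And>i. i < N \<Longrightarrow> cls i < k" and nz: "\<And>c. c < k \<Longrightarrow> x + w c c \<noteq> 0"
  shows "x \<cdot>\<^sub>m 1\<^sub>m N - class_mat N cls w = mat_diag N (\<lambda>i. x + w (cls i) (cls i)) *
    (1\<^sub>m N + mat N k (\<lambda>(i, c). if cls i = c then - 1 / (x + w c c) else 0) * mat k N (\<lambda>(c, j). w c (cls j)))"
proof -
  let ?L = "mat N k (\<lambda>(i, c). if cls i = c then - 1 / (x + w c c) else 0)"
  let ?R = "mat k N (\<lambda>(c, j). w c (cls j))"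
  have LR: "?L * ?R = mat N N (\<lambda>(i, j). - w (cls i) (cls j) / (x + w (cls i) (cls i)))"
  proof (rule eq_matI)
    fix i j assume "i < dim_row (mat N N (\<lambda>(i, j). - w (cls i) (cls j) / (x + w (cls i) (cls i))))"
      "j < dim_col (mat N N (\<lambda>(i, j). - w (cls i) (cls j) / (x + w (cls i) (cls i))))"
    then have ij: "i < N" "j < N" by auto
    then have "(?L * ?R) $$ (i, j) = (\<Sum>c<k. (if cls i = c then - 1 / (x + w c c) else 0) * w c (cls j))"
      by (simp add: scalar_prod_def atLeast0LessThan)
    also have "\<dots> = (\<Sum>c<k. if cls i = c then - w c (cls j) / (x + w c c) else 0)"
      by (intro sum.cong) auto
    finally show "(?L * ?R) $$ (i, j) = mat N N (\<lambda>(i, j). - w (cls i) (cls j) / (x + w (cls i) (cls i))) $$ (i, j)"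
      using ij cls[of i] by (simp add: sum.delta' eq_commute[of "cls i"])
  qed simp_all
  show ?thesis
  proof (rule eq_matI)
    fix i j assume "i < dim_row (mat_diag N (\<lambda>i. x + w (cls i) (cls i)) * (1\<^sub>m N + ?L * ?R))"
      "j < dim_col (mat_diag N (\<lambda>i. x + w (cls i) (cls i)) * (1\<^sub>m N + ?L * ?R))"
    then have ij: "i < N" "j < N" by (simp_all add: mat_diag_def)
    then show "(x \<cdot>\<^sub>m 1\<^sub>m N - class_mat N cls w) $$ (i, j) = (mat_diag N (\<lambda>i. x + w (cls i) (cls i)) * (1\<^sub>m N + ?L * ?R)) $$ (i, j)"
      using nz[OF cls[OF ij(1)]] unfolding LR
      by (subst mat_diag_mult_left[of _ N N]) (auto simp: class_mat_def distrib_left right_diff_distrib)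
  qed (simp_all add: class_mat_def mat_diag_def)
qed

lemma quotient_mat_factorization:
  fixes w :: "nat \<Rightarrow> nat \<Rightarrow> 'a::field"
  assumes nz: "\<And>c. c < k \<Longrightarrow> x + w c c \<noteq> 0"
  shows "(1\<^sub>m k + mat k N (\<lambda>(c, j). w c (cls j)) * mat N k (\<lambda>(i, c). if cls i = c then - 1 / (x + w c c) else 0))
    * mat_diag k (\<lambda>c. x + w c c) = x \<cdot>\<^sub>m 1\<^sub>m k - quotient_mat k (\<lambda>d. of_nat (class_size N cls d)) w"
proof -
  let ?L = "mat N k (\<lambda>(i, c). if cls i = c then - 1 / (x + w c c) else 0)"
  let ?R = "mat k N (\<lambda>(c, j). w c (cls j))"
  have RL: "?R * ?L = mat k k (\<lambda>(c, d). - w c d * of_nat (class_size N cls d) / (x + w d d))"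
  proof (rule eq_matI)
    fix c d assume "c < dim_row (mat k k (\<lambda>(c, d). - w c d * of_nat (class_size N cls d) / (x + w d d)))"
      "d < dim_col (mat k k (\<lambda>(c, d). - w c d * of_nat (class_size N cls d) / (x + w d d)))"
    then have cd: "c < k" "d < k" by auto
    then have "(?R * ?L) $$ (c, d) = (\<Sum>i<N. w c (cls i) * (if cls i = d then - 1 / (x + w d d) else 0))"
      by (simp add: scalar_prod_def atLeast0LessThan)
    also have "\<dots> = (\<Sum>i<N. if cls i = d then - w c d / (x + w d d) else 0)"
      by (intro sum.cong) auto
    finally show "(?R * ?L) $$ (c, d) = mat k k (\<lambda>(c, d). - w c d * of_nat (class_size N cls d) / (x + w d d)) $$ (c, d)"
      using cd by (simp add: sum_class_indicator)
  qed simp_all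
  show ?thesis
  proof (rule eq_matI)
    fix c d assume "c < dim_row (x \<cdot>\<^sub>m 1\<^sub>m k - quotient_mat k (\<lambda>d. of_nat (class_size N cls d)) w)"
      "d < dim_col (x \<cdot>\<^sub>m 1\<^sub>m k - quotient_mat k (\<lambda>d. of_nat (class_size N cls d)) w)"
    then have cd: "c < k" "d < k" by (simp_all add: quotient_mat_def)
    then show "((1\<^sub>m k + ?R * ?L) * mat_diag k (\<lambda>c. x + w c c)) $$ (c, d)
        = (x \<cdot>\<^sub>m 1\<^sub>m k - quotient_mat k (\<lambda>d. of_nat (class_size N cls d)) w) $$ (c, d)"
      using nz[OF cd(2)] unfolding RL
      by (subst mat_diag_mult_right[of _ k k]) (auto simp: quotient_mat_def distrib_right left_diff_distrib)
  qed (simp_all add: quotient_mat_def mat_diag_def)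
qed

lemma det_class_mat:
  fixes w :: "nat \<Rightarrow> nat \<Rightarrow> 'a::field"
  assumes cls: "\<And>i. i < N \<Longrightarrow> cls i < k" and nz: "\<And>c. c < k \<Longrightarrow> x + w c c \<noteq> 0"
  shows "det (x \<cdot>\<^sub>m 1\<^sub>m N - class_mat N cls w) * (\<Prod>c<k. x + w c c)
    = (\<Prod>i<N. x + w (cls i) (cls i)) * det (x \<cdot>\<^sub>m 1\<^sub>m k - quotient_mat k (\<lambda>d. of_nat (class_size N cls d)) w)"
proof -
  define L where "L = mat N k (\<lambda>(i, c). if cls i = c then - 1 / (x + w c c) else 0)"
  define R where "R = mat k N (\<lambda>(c, j). w c (cls j))"
  define Dx where "Dx = mat_diag N (\<lambda>i. x + w (cls i) (cls i))"
  define Dq where "Dq = mat_diag k (\<lambda>c. x + w c c)"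
  have L: "L \<in> carrier_mat N k" and R: "R \<in> carrier_mat k N" by (simp_all add: L_def R_def)
  have Dx: "Dx \<in> carrier_mat N N" and Dq: "Dq \<in> carrier_mat k k" by (simp_all add: Dx_def Dq_def)
  have "det (x \<cdot>\<^sub>m 1\<^sub>m N - class_mat N cls w) * det Dq = det Dx * det (1\<^sub>m N + L * R) * det Dq"
  proof -
    have "x \<cdot>\<^sub>m 1\<^sub>m N - class_mat N cls w = Dx * (1\<^sub>m N + L * R)"
      unfolding L_def R_def Dx_def by (rule class_mat_factorization[OF cls nz])
    then show ?thesis using Dx L R by (simp add: det_mult[OF Dx])
  qed
  also have "\<dots> = det Dx * det ((1\<^sub>m k + R * L) * Dq)"
    using L R Dq by (simp add: det_mult[of _ k] det_one_plus_mult_commute[OF L R])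
  also have "(1\<^sub>m k + R * L) * Dq = x \<cdot>\<^sub>m 1\<^sub>m k - quotient_mat k (\<lambda>d. of_nat (class_size N cls d)) w"
    unfolding L_def R_def Dq_def by (rule quotient_mat_factorization[OF nz])
  finally show ?thesis by (simp add: Dx_def Dq_def det_mat_diag)
qed

lemma poly_eq_if_eq_off_finite:
  fixes p q :: "'a::{idom, ring_char_0} poly"
  assumes "finite S" and "\<And>x. x \<notin> S \<Longrightarrow> poly p x = poly q x"
  shows "p = q"
proof (rule ccontr)
  assume "p \<noteq> q"
  then have "finite {x. poly (p - q) x = 0}" by (intro poly_roots_finite) simp
  moreover have "- S \<subseteq> {x. poly (p - q) x = 0}" using assms(2) by auto
  ultimately have "finite (S \<union> - S)" using assms(1) finite_subset by blast
  then show False by (simp add: infinite_UNIV_char_0)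
qed

lemma poly_char_poly:
  fixes A :: "'a::field mat"
  assumes "A \<in> carrier_mat n n"
  shows "poly (char_poly A) x = det (x \<cdot>\<^sub>m 1\<^sub>m n - A)"
proof -
  have "- char_matrix A x = x \<cdot>\<^sub>m 1\<^sub>m n - A"
    using assms unfolding char_matrix_def by (intro eq_matI) auto
  then show ?thesis using char_poly_matrix[OF assms] by simp
qed

lemma prod_by_class:
  assumes "\<And>i. i < N \<Longrightarrow> cls i < k"
  shows "(\<Prod>i<N. f (cls i)) = (\<Prod>c<k. f c ^ class_size N cls c)"
proof -
  have "(\<Prod>i<N. f (cls i)) = (\<Prod>c<k. \<Prod>i\<in>{i. i < N \<and> cls i = c}. f (cls i))"
    using assms by (subst prod.group[symmetric, of "{..<N}" "{..<k}" cls]) (auto intro!: prod.cong)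
  also have "\<dots> = (\<Prod>c<k. f c ^ class_size N cls c)"
    by (intro prod.cong refl) (simp add: class_size_def)
  finally show ?thesis .
qed

lemma char_poly_class_mat:
  fixes w :: "nat \<Rightarrow> nat \<Rightarrow> 'a::field_char_0"
  assumes cls: "\<And>i. i < N \<Longrightarrow> cls i < k" and nonempty: "\<And>c. c < k \<Longrightarrow> class_size N cls c \<noteq> 0"
  shows "char_poly (class_mat N cls w) = (\<Prod>c<k. [:w c c, 1:] ^ (class_size N cls c - 1))
    * char_poly (quotient_mat k (\<lambda>d. of_nat (class_size N cls d)) w)"
    (is "char_poly ?A = ?P * char_poly ?Q")
proof -
  define F where "F = (\<Prod>c<k. [:w c c, 1:])"
  have "char_poly ?A * F = (\<Prod>i<N. [:w (cls i) (cls i), 1:]) * char_poly ?Q"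
  proof (rule poly_eq_if_eq_off_finite[of "(\<lambda>c. - w c c) ` {..<k}"])
    fix x assume x: "x \<notin> (\<lambda>c. - w c c) ` {..<k}"
    have nz: "x + w c c \<noteq> 0" if "c < k" for c
    proof
      assume "x + w c c = 0"
      then have "x = - w c c" by (simp add: eq_neg_iff_add_eq_0)
      with that x show False by blast
    qed
    note det_class_mat[where N = N and cls = cls and k = k and w = w and x = x, OF cls nz]
    moreover have "?A \<in> carrier_mat N N" and "?Q \<in> carrier_mat k k"
      by (simp_all add: class_mat_def quotient_mat_def)
    moreover have "\<And>a. poly [:a, 1:] x = x + a" by simp
    ultimately show "poly (char_poly ?A * F) x = poly ((\<Prod>i<N. [:w (cls i) (cls i), 1:]) * char_poly ?Q) x"
      by (simp only: F_def poly_mult poly_prod poly_char_poly)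
  qed simp
  also have "(\<Prod>i<N. [:w (cls i) (cls i), 1:]) = (\<Prod>c<k. [:w c c, 1:] ^ class_size N cls c)"
    by (rule prod_by_class[where f = "\<lambda>c. [:w c c, 1:]", OF cls])
  also have "\<dots> = ?P * F"
    unfolding F_def prod.distrib[symmetric] using nonempty by (intro prod.cong refl) (metis lessThan_iff neq0_conv power_minus_mult)
  finally have "char_poly ?A * F = ?P * char_poly ?Q * F" by (simp only: mult_ac)
  then show ?thesis by (simp add: F_def)
qed

lemma proots_prod_linear_factors: "proots (\<Prod>x\<in>#R. [:-x, 1:]) = R"
proof (induction R)
  case (add x R)
  have "(\<Prod>x\<in>#R. [:-x, 1:]) \<noteq> 0" by (induction R) (simp_all del: mult_pCons_left)
  with add show ?case by (simp add: proots_mult del: mult_pCons_left)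
qed simp

lemma proots_of_real_prod_linear_factors:
  "proots (map_poly complex_of_real (\<Prod>x\<in>#R. [:-x, 1:])) = image_mset complex_of_real R"
proof -
  interpret of_real_poly_hom: map_poly_comm_ring_hom "complex_of_real" ..
  have "map_poly complex_of_real (\<Prod>x\<in>#R. [:-x, 1:]) = (\<Prod>x\<in>#image_mset complex_of_real R. [:-x, 1:])"
    by (induction R) (simp_all add: of_real_poly_hom.hom_mult del: mult_pCons_left)
  then show ?thesis by (simp add: proots_prod_linear_factors)
qed

lemma prod_power_linear_factors:
  fixes r :: "'b \<Rightarrow> 'a::comm_ring_1"
  assumes "finite C"
  shows "(\<Prod>c\<in>C. [:-r c, 1:] ^ k c) = (\<Prod>x\<in>#(\<Sum>c\<in>C. replicate_mset (k c) (r c)). [:-x, 1:])"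
  using assms by (induction C rule: finite_induct) simp_all

lemma monic_quadratic_split:
  fixes c0 c1 :: real
  assumes "c0 < 0"
  shows "\<exists>s1 s2. [:c0, c1, 1:] = [:-s1, 1:] * [:-s2, 1:] \<and> s1 < 0 \<and> 0 < s2"
proof -
  define D where "D = sqrt (c1\<^sup>2 - 4 * c0)"
  have "0 \<le> c1\<^sup>2 - 4 * c0" using assms zero_le_power2[of c1] by linarith
  then have "D\<^sup>2 = c1\<^sup>2 - 4 * c0" unfolding D_def by simp
  then have "c0 = (c1 * c1 - D * D) / 4" by (simp add: power2_eq_square)
  then have "[:c0, c1, 1:] = [:-((- c1 - D) / 2), 1:] * [:-((- c1 + D) / 2), 1:]"
    by (simp add: field_simps)
  moreover have "\<bar>c1\<bar> < D" unfolding D_def using assms by (intro real_less_rsqrt) simp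
  ultimately show ?thesis by (intro exI[of _ "(- c1 - D) / 2"] exI[of _ "(- c1 + D) / 2"]) auto
qed

lemma monic_degree2_poly_eq:
  fixes g :: "'a::comm_ring_1 poly"
  assumes "degree g = 2" and "lead_coeff g = 1"
  shows "g = [:coeff g 0, coeff g 1, 1:]"
proof (rule poly_eqI)
  fix i :: nat
  consider "i = 0" | "i = 1" | "i = 2" | "2 < i" by linarith
  then show "coeff g i = coeff [:coeff g 0, coeff g 1, 1:] i"
    using assms by cases (simp_all add: coeff_eq_0 numeral_2_eq_2)
qed

lemma quartic_one_negative_root:
  fixes q :: "real poly"
  assumes deg: "degree q = 4" and monic: "lead_coeff q = 1"
    and q0: "poly q 0 < 0" and x1: "0 < x1" and x12: "x1 < x2"
    and q1: "0 < poly q x1" and q2: "poly q x2 < 0"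
  shows "\<exists>s R. q = [:-s, 1:] * (\<Prod>x\<in>#R. [:-x, 1:]) \<and> s < 0 \<and> (\<forall>x\<in>#R. 0 < x)"
proof -
  obtain r1 where r1: "0 < r1" "r1 < x1" "poly q r1 = 0" using poly_IVT_pos[OF x1 q0 q1] by blast
  obtain r2 where r2: "x1 < r2" "poly q r2 = 0" using poly_IVT_neg[OF x12 q1 q2] by blast
  obtain h where h: "q = [:-r1, 1:] * h" using r1(3) by (metis dvdE poly_eq_0_iff_dvd)
  have "poly h r2 = 0" using r1 r2 unfolding h by simp
  then obtain g where g: "h = [:-r2, 1:] * g" by (metis dvdE poly_eq_0_iff_dvd)
  have q_eq: "q = [:-r1, 1:] * [:-r2, 1:] * g" unfolding h g by (simp only: mult.assoc)
  have "g \<noteq> 0" using deg q_eq by auto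
  then have "degree g = 2"
    using deg unfolding q_eq by (simp add: degree_mult_eq del: mult_pCons_left)
  moreover have "lead_coeff g = 1" using monic unfolding q_eq lead_coeff_mult by simp
  ultimately have g_eq: "g = [:coeff g 0, coeff g 1, 1:]" by (rule monic_degree2_poly_eq)
  have "coeff g 0 * (r2 * r1) < 0" using q0 unfolding q_eq by (subst (asm) g_eq) simp
  then have "coeff g 0 < 0" using r1 r2 x1 by (simp add: mult_less_0_iff)
  then obtain s1 s2 where g_split: "g = [:-s1, 1:] * [:-s2, 1:]" and s: "s1 < 0" "0 < s2"
    using monic_quadratic_split g_eq by metis
  have "q = [:-s1, 1:] * ([:-r1, 1:] * ([:-r2, 1:] * [:-s2, 1:]))"
    unfolding q_eq g_split by (simp only: mult_ac)
  then have "q = [:-s1, 1:] * (\<Prod>x\<in>#{#r1, r2, s2#}. [:-x, 1:])" by (simp del: mult_pCons_left)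
  then show ?thesis using r1 r2 x1 s by (intro exI[of _ s1] exI[of _ "{#r1, r2, s2#}"]) auto
qed

lemma codegree_remove_edge:
  assumes "e \<in> E" and "finite E"
  shows "codegree E i j = codegree (E - {e}) i j + (if i \<in> e \<and> j \<in> e then 1 else 0)"
proof -
  have minus: "{f \<in> E - {e}. i \<in> f \<and> j \<in> f} = {f \<in> E. i \<in> f \<and> j \<in> f} - {e}" by auto
  show ?thesis
  proof (cases "i \<in> e \<and> j \<in> e")
    case True
    then have "Suc (card ({f \<in> E. i \<in> f \<and> j \<in> f} - {e})) = card {f \<in> E. i \<in> f \<and> j \<in> f}"
      using assms by (intro card_Suc_Diff1) auto
    then show ?thesis using True unfolding codegree_def minus by simp
  next
    case False
    then have "{f \<in> E. i \<in> f \<and> j \<in> f} - {e} = {f \<in> E. i \<in> f \<and> j \<in> f}" by auto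
    then show ?thesis using False unfolding codegree_def minus by simp
  qed
qed

lemma bipartite_triples_through:
  assumes "A \<inter> B = {}" and "i \<in> A \<union> B" and "j \<in> A \<union> B" and "i \<noteq> j"
  shows "{f. f \<subseteq> A \<union> B \<and> card f = 3 \<and> f \<inter> A \<noteq> {} \<and> f \<inter> B \<noteq> {} \<and> i \<in> f \<and> j \<in> f}
    = (\<lambda>k. {i, j, k}) ` {k \<in> A \<union> B - {i, j}. (i \<in> A \<and> j \<in> A \<longrightarrow> k \<in> B) \<and> (i \<in> B \<and> j \<in> B \<longrightarrow> k \<in> A)}"
    (is "?F = (\<lambda>k. {i, j, k}) ` ?T")
proof (intro equalityI subsetI)
  fix f assume f: "f \<in> ?F"
  then have "finite f" by (auto intro: card_ge_0_finite)
  with f assms(4) have "card (f - {i, j}) = 1" by (simp add: card_Diff_subset)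
  then obtain k where "f - {i, j} = {k}" by (rule card_1_singletonE)
  then have "f = {i, j, k}" "k \<noteq> i" "k \<noteq> j" using f by auto
  with f assms(1) show "f \<in> (\<lambda>k. {i, j, k}) ` ?T" by auto
next
  fix f assume "f \<in> (\<lambda>k. {i, j, k}) ` ?T"
  with assms show "f \<in> ?F" by auto
qed

lemma card_bipartite_triples_through:
  assumes "finite A" and "finite B" and "A \<inter> B = {}" and "i \<in> A \<union> B" and "j \<in> A \<union> B" and "i \<noteq> j"
  shows "card {f. f \<subseteq> A \<union> B \<and> card f = 3 \<and> f \<inter> A \<noteq> {} \<and> f \<inter> B \<noteq> {} \<and> i \<in> f \<and> j \<in> f}
    = (if i \<in> A \<and> j \<in> A then card B else if i \<in> B \<and> j \<in> B then card A else card A + card B - 2)"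
proof -
  let ?T = "{k \<in> A \<union> B - {i, j}. (i \<in> A \<and> j \<in> A \<longrightarrow> k \<in> B) \<and> (i \<in> B \<and> j \<in> B \<longrightarrow> k \<in> A)}"
  have "inj_on (\<lambda>k. {i, j, k}) ?T" by (rule inj_onI) (auto simp: insert_eq_iff doubleton_eq_iff)
  then have "card ((\<lambda>k. {i, j, k}) ` ?T) = card ?T" by (rule card_image)
  moreover have "card ?T = (if i \<in> A \<and> j \<in> A then card B else if i \<in> B \<and> j \<in> B then card A else card A + card B - 2)"
  proof -
    consider "i \<in> A" "j \<in> A" | "i \<in> B" "j \<in> B" | "\<not> (i \<in> A \<and> j \<in> A)" "\<not> (i \<in> B \<and> j \<in> B)" by blast
    then show ?thesis
    proof cases
      case 1
      then have T: "?T = B" using assms(3) by auto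
      show ?thesis unfolding T using 1 by simp
    next
      case 2
      then have T: "?T = A" using assms(3) by auto
      show ?thesis unfolding T using 2 assms(3) by auto
    next
      case 3
      then have T: "?T = A \<union> B - {i, j}" by auto
      have "card (A \<union> B - {i, j}) = card A + card B - 2"
        using assms by (simp add: card_Diff_subset card_Un_disjoint)
      then show ?thesis unfolding T using 3 by auto
    qed
  qed
  ultimately show ?thesis by (simp add: bipartite_triples_through[OF assms(3-6)])
qed

lemma complete_bip3_edges_parts:
  assumes "{A, B} = {bip_part1 m n, bip_part2 m n}"
  shows "complete_bip3_edges m n = {f. f \<subseteq> A \<union> B \<and> card f = 3 \<and> f \<inter> A \<noteq> {} \<and> f \<inter> B \<noteq> {}}"
  using assms unfolding complete_bip3_edges_def doubleton_eq_iff by (auto simp: Un_commute)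

lemma bip_parts_partition:
  assumes "{A, B} = {bip_part1 m n, bip_part2 m n}"
  shows "finite A" and "finite B" and "A \<inter> B = {}" and "A \<union> B = {..<m + n}"
  using assms unfolding doubleton_eq_iff bip_part1_def bip_part2_def by auto

lemma codegree_complete_bip3:
  assumes parts: "{A, B} = {bip_part1 m n, bip_part2 m n}" and "i < m + n" and "j < m + n" and "i \<noteq> j"
  shows "codegree (complete_bip3_edges m n) i j
    = (if i \<in> A \<and> j \<in> A then card B else if i \<in> B \<and> j \<in> B then card A else card A + card B - 2)"
proof -
  have through: "{f \<in> complete_bip3_edges m n. i \<in> f \<and> j \<in> f}
      = {f. f \<subseteq> A \<union> B \<and> card f = 3 \<and> f \<inter> A \<noteq> {} \<and> f \<inter> B \<noteq> {} \<and> i \<in> f \<and> j \<in> f}"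
    unfolding complete_bip3_edges_parts[OF parts] by auto
  have "i \<in> A \<union> B" and "j \<in> A \<union> B" using assms(2,3) bip_parts_partition(4)[OF parts] by auto
  then show ?thesis
    unfolding codegree_def through
    by (rule card_bipartite_triples_through[OF bip_parts_partition(1-3)[OF parts] _ _ assms(4)])
qed

lemma complete_bip3_edge_orientation:
  assumes "e \<in> complete_bip3_edges m n"
  obtains A B where "{A, B} = {bip_part1 m n, bip_part2 m n}" and "card (e \<inter> A) = 1" and "card (e \<inter> B) = 2"
proof -
  let ?V1 = "bip_part1 m n" and ?V2 = "bip_part2 m n"
  have e: "e \<subseteq> ?V1 \<union> ?V2" "card e = 3" "e \<inter> ?V1 \<noteq> {}" "e \<inter> ?V2 \<noteq> {}"
    using assms unfolding complete_bip3_edges_def by auto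
  have "finite e" using e(2) by (intro card_ge_0_finite) simp
  have "e = (e \<inter> ?V1) \<union> (e \<inter> ?V2)" and "(e \<inter> ?V1) \<inter> (e \<inter> ?V2) = {}"
    using e(1) by (auto simp: bip_part1_def bip_part2_def)
  then have "card (e \<inter> ?V1) + card (e \<inter> ?V2) = 3"
    using \<open>finite e\<close> e(2) by (metis card_Un_disjoint finite_Int)
  moreover have "card (e \<inter> ?V1) \<noteq> 0" and "card (e \<inter> ?V2) \<noteq> 0" using \<open>finite e\<close> e(3,4) by simp_all
  ultimately consider "card (e \<inter> ?V1) = 1" "card (e \<inter> ?V2) = 2" | "card (e \<inter> ?V2) = 1" "card (e \<inter> ?V1) = 2" by linarith
  then show ?thesis using that by cases (auto simp: insert_commute)
qed

lemma finite_complete_bip3_edges: "finite (complete_bip3_edges m n)"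
  by (rule finite_subset[of _ "Pow (bip_part1 m n \<union> bip_part2 m n)"])
    (auto simp: complete_bip3_edges_def bip_part1_def bip_part2_def)

definition edge_class :: "nat set \<Rightarrow> nat set \<Rightarrow> nat \<Rightarrow> nat" where
  "edge_class A e i = (if i \<in> A then 0 else 2) + (if i \<in> e then 1 else 0)"

text \<open>For \<open>edge_class A e\<close>, a vertex has class \<open>c < 2\<close> iff it lies in \<open>A\<close>, and odd class iff it
  lies on \<open>e\<close>. With \<open>a = card A\<close>, \<open>b = card B\<close>, two distinct vertices of the same part have
  co-degree the size of the other part and two vertices of different parts have co-degree
  \<open>a + b - 2\<close>; removing \<open>e\<close> lowers this by one when both lie on \<open>e\<close>.\<close>

definition bip_weight :: "real \<Rightarrow> real \<Rightarrow> nat \<Rightarrow> nat \<Rightarrow> real" where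
  "bip_weight a b c d = 1 - 2 * ((if c < 2 \<and> d < 2 then b else if 2 \<le> c \<and> 2 \<le> d then a else a + b - 2)
     - (if odd c \<and> odd d then 1 else 0))"

lemma seidel_matrix_complete_bip3_remove_edge:
  assumes parts: "{A, B} = {bip_part1 m n, bip_part2 m n}" and e: "e \<in> complete_bip3_edges m n"
  shows "seidel_matrix (m + n) (complete_bip3_edges m n - {e})
    = class_mat (m + n) (edge_class A e) (bip_weight (card A) (card B))"
proof (rule eq_matI)
  fix i j assume "i < dim_row (class_mat (m + n) (edge_class A e) (bip_weight (card A) (card B)))"
    "j < dim_col (class_mat (m + n) (edge_class A e) (bip_weight (card A) (card B)))"
  then have ij: "i < m + n" "j < m + n" by (simp_all add: class_mat_def)
  show "seidel_matrix (m + n) (complete_bip3_edges m n - {e}) $$ (i, j)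
      = class_mat (m + n) (edge_class A e) (bip_weight (card A) (card B)) $$ (i, j)"
  proof (cases "i = j")
    case True
    then show ?thesis using ij by (simp add: seidel_matrix_def class_mat_def)
  next
    case False
    have "real (codegree (complete_bip3_edges m n - {e}) i j)
        = real (codegree (complete_bip3_edges m n) i j) - (if i \<in> e \<and> j \<in> e then 1 else 0)"
      using codegree_remove_edge[OF e finite_complete_bip3_edges, of i j] by simp
    moreover have "card A + card B = m + n"
      using bip_parts_partition[OF parts] by (metis card_Un_disjoint card_lessThan)
    ultimately show ?thesis
      using False ij codegree_complete_bip3[OF parts ij False] bip_parts_partition(3,4)[OF parts]
      by (auto simp: seidel_matrix_def class_mat_def bip_weight_def edge_class_def of_nat_diff)
  qed
qed (simp_all add: seidel_matrix_def class_mat_def)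

lemma class_size_edge_class:
  assumes parts: "{A, B} = {bip_part1 m n, bip_part2 m n}" and "e \<subseteq> A \<union> B"
    and "card (e \<inter> A) = 1" and "card (e \<inter> B) = 2" and "c < 4"
  shows "class_size (m + n) (edge_class A e) c = [card A - 1, 1, card B - 2, 2] ! c"
proof -
  note AB = bip_parts_partition[OF parts]
  have "{i. i < m + n \<and> edge_class A e i = c} =
      (if c = 0 then A - e else if c = 1 then e \<inter> A else if c = 2 then B - e else e \<inter> B)"
    using AB(3,4) \<open>e \<subseteq> A \<union> B\<close> \<open>c < 4\<close> by (auto simp: edge_class_def)
  then show ?thesis
    using assms AB(1,2) \<open>c < 4\<close> unfolding class_size_def
    by (auto simp: card_Diff_subset_Int Int_commute numeral_eq_Suc less_Suc_eq)
qed

lemma bip_weight_diag_neg: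
  assumes "3 \<le> a" and "3 \<le> b"
  shows "bip_weight a b c c < 0"
  using assms by (simp add: bip_weight_def)

definition bip_quotient :: "real \<Rightarrow> real \<Rightarrow> real mat" where
  "bip_quotient a b = quotient_mat 4 (\<lambda>d. [a - 1, 1, b - 2, 2] ! d) (bip_weight a b)"

lemma det_3x3:
  fixes A :: "'a::comm_ring_1 mat"
  assumes "A \<in> carrier_mat 3 3"
  shows "det A = A $$ (0,0) * (A $$ (1,1) * A $$ (2,2) - A $$ (1,2) * A $$ (2,1))
     - A $$ (0,1) * (A $$ (1,0) * A $$ (2,2) - A $$ (1,2) * A $$ (2,0))
     + A $$ (0,2) * (A $$ (1,0) * A $$ (2,1) - A $$ (1,1) * A $$ (2,0))"
proof -
  have det2: "det B = B $$ (0,0) * B $$ (1,1) - B $$ (0,1) * B $$ (1,0)" if "B \<in> carrier_mat 2 2" for B :: "'a mat"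
    using that by (subst laplace_expansion_row[of _ 2 0])
      (auto simp: cofactor_def mat_delete_def det_single numeral_2_eq_2 lessThan_Suc)
  show ?thesis
    using assms by (subst laplace_expansion_row[of _ 3 0])
      (auto simp: cofactor_def numeral_3_eq_3 lessThan_Suc det2 mat_delete_def algebra_simps numeral_2_eq_2)
qed

lemma det_4x4:
  fixes A :: "'a::comm_ring_1 mat"
  assumes "A \<in> carrier_mat 4 4"
  shows "det A =
       A $$ (0,0) * (A $$ (1,1) * (A $$ (2,2) * A $$ (3,3) - A $$ (2,3) * A $$ (3,2)) - A $$ (1,2) * (A $$ (2,1) * A $$ (3,3) - A $$ (2,3) * A $$ (3,1)) + A $$ (1,3) * (A $$ (2,1) * A $$ (3,2) - A $$ (2,2) * A $$ (3,1)))
     - A $$ (0,1) * (A $$ (1,0) * (A $$ (2,2) * A $$ (3,3) - A $$ (2,3) * A $$ (3,2)) - A $$ (1,2) * (A $$ (2,0) * A $$ (3,3) - A $$ (2,3) * A $$ (3,0)) + A $$ (1,3) * (A $$ (2,0) * A $$ (3,2) - A $$ (2,2) * A $$ (3,0)))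
     + A $$ (0,2) * (A $$ (1,0) * (A $$ (2,1) * A $$ (3,3) - A $$ (2,3) * A $$ (3,1)) - A $$ (1,1) * (A $$ (2,0) * A $$ (3,3) - A $$ (2,3) * A $$ (3,0)) + A $$ (1,3) * (A $$ (2,0) * A $$ (3,1) - A $$ (2,1) * A $$ (3,0)))
     - A $$ (0,3) * (A $$ (1,0) * (A $$ (2,1) * A $$ (3,2) - A $$ (2,2) * A $$ (3,1)) - A $$ (1,1) * (A $$ (2,0) * A $$ (3,2) - A $$ (2,2) * A $$ (3,0)) + A $$ (1,2) * (A $$ (2,0) * A $$ (3,1) - A $$ (2,1) * A $$ (3,0)))"
proof -
  have four: "(4::nat) = Suc 3" by simp
  show ?thesis
    using assms by (subst laplace_expansion_row[of _ 4 0])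
      (auto simp: cofactor_def four numeral_3_eq_3 lessThan_Suc det_3x3 mat_delete_def algebra_simps numeral_2_eq_2)
qed

lemma bip_quotient_carrier: "bip_quotient a b \<in> carrier_mat 4 4"
  by (simp add: bip_quotient_def quotient_mat_def)

text \<open>After the shift \<open>a = u + 3\<close>, \<open>b = v + 3\<close>, all three values are, up to sign, polynomials in
  \<open>u\<close> and \<open>v\<close> with positive coefficients.\<close>

lemma bip_quotient_char_poly_signs:
  fixes u v :: real
  assumes "0 \<le> u" and "0 \<le> v"
  defines "q \<equiv> char_poly (bip_quotient (u + 3) (v + 3))"
  shows "poly q 0 < 0" and "0 < poly q (2 * v + 5)" and "poly q (2 * u + 2 * v + 7) < 0"
proof -
  have carrier: "x \<cdot>\<^sub>m 1\<^sub>m 4 - bip_quotient (u + 3) (v + 3) \<in> carrier_mat 4 4" for x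
    by (rule minus_carrier_mat[OF bip_quotient_carrier])
  have "poly q x = det (x \<cdot>\<^sub>m 1\<^sub>m 4 - bip_quotient (u + 3) (v + 3))" for x
    unfolding q_def by (rule poly_char_poly[OF bip_quotient_carrier])
  note det_eval = this det_4x4[OF carrier]
  note expand = bip_quotient_def quotient_mat_def bip_weight_def
    algebra_simps power2_eq_square power3_eq_cube power4_eq_xxxx
  define p0 where "p0 = 7811 + 11541*v + 6482*v^2 + 1660*v^3 + 168*v^4 + 10665*u + 13220*u*v + 6070*u*v^2
      + 1240*u*v^3 + 104*u*v^4 + 5542*u^2 + 5670*u^2*v + 2012*u^2*v^2 + 280*u^2*v^3 + 16*u^2*v^4
      + 1308*u^3 + 1104*u^3*v + 280*u^3*v^2 + 16*u^3*v^3 + 120*u^4 + 88*u^4*v + 16*u^4*v^2"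
  define p1 where "p1 = 384 + 512*v + 288*v^2 + 64*v^3 + 640*u + 672*u*v + 208*u*v^2 + 32*u*v^3
      + 288*u^2 + 272*u^2*v + 32*u^2*v^2 + 32*u^3 + 32*u^3*v"
  define p2 where "p2 = 160 + 416*v + 456*v^2 + 248*v^3 + 48*v^4 + 464*u + 1208*u*v + 1112*u*v^2
      + 432*u*v^3 + 64*u*v^4 + 480*u^2 + 1024*u^2*v + 696*u^2*v^2 + 168*u^2*v^3 + 16*u^2*v^4
      + 208*u^3 + 360*u^3*v + 168*u^3*v^2 + 16*u^3*v^3 + 32*u^4 + 48*u^4*v + 16*u^4*v^2"
  have "0 < p0" and "0 < p1" and "0 < p2" unfolding p0_def p1_def p2_def
    using assms by (intro add_pos_nonneg mult_nonneg_nonneg zero_le_power; simp)+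
  moreover have "poly q 0 = - p0" and "poly q (2 * v + 5) = p1" and "poly q (2 * u + 2 * v + 7) = - p2"
    unfolding det_eval p0_def p1_def p2_def by (simp_all add: expand)
  ultimately show "poly q 0 < 0" and "0 < poly q (2 * v + 5)" and "poly q (2 * u + 2 * v + 7) < 0"
    by simp_all
qed

lemma char_poly_bip_quotient_split:
  fixes a b :: real
  assumes "3 \<le> a" and "3 \<le> b"
  shows "\<exists>s R. char_poly (bip_quotient a b) = [:-s, 1:] * (\<Prod>x\<in>#R. [:-x, 1:]) \<and> s < 0 \<and> (\<forall>x\<in>#R. 0 < x)"
proof -
  obtain u v where uv: "a = u + 3" "b = v + 3" "0 \<le> u" "0 \<le> v"
    using assms by (metis add.commute diff_add_cancel diff_ge_0_iff_ge)
  have "degree (char_poly (bip_quotient a b)) = 4" and "lead_coeff (char_poly (bip_quotient a b)) = 1"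
    using degree_monic_char_poly[OF bip_quotient_carrier] by simp_all
  moreover note bip_quotient_char_poly_signs[OF uv(3,4), folded uv(1,2)]
  moreover have "0 < 2 * v + 5" and "2 * v + 5 < 2 * u + 2 * v + 7" using uv by simp_all
  ultimately show ?thesis by (intro quartic_one_negative_root) assumption+
qed

lemma char_poly_seidel_complete_bip3_remove_edge:
  assumes "3 \<le> m" and "3 \<le> n" and e: "e \<in> complete_bip3_edges m n"
  shows "\<exists>s R. char_poly (seidel_matrix (m + n) (complete_bip3_edges m n - {e})) = [:-s, 1:] * (\<Prod>x\<in>#R. [:-x, 1:])
    \<and> s < 0 \<and> (\<forall>x\<in>#R. 0 < x)"
proof -
  obtain A B where parts: "{A, B} = {bip_part1 m n, bip_part2 m n}" and eA: "card (e \<inter> A) = 1" and eB: "card (e \<inter> B) = 2"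
    using complete_bip3_edge_orientation[OF e] by blast
  define w where "w = bip_weight (card A) (card B)"
  define K where "K = class_size (m + n) (edge_class A e)"
  define D where "D = (\<Sum>c<4. replicate_mset (K c - 1) (- w c c))"
  have "e \<subseteq> A \<union> B" using e complete_bip3_edges_parts[OF parts] by auto
  note K_eq = class_size_edge_class[OF parts this eA eB, folded K_def]
  have cards: "3 \<le> card A" "3 \<le> card B"
    using parts assms unfolding doubleton_eq_iff bip_part1_def bip_part2_def by auto
  obtain s R where split: "char_poly (bip_quotient (card A) (card B)) = [:-s, 1:] * (\<Prod>x\<in>#R. [:-x, 1:])"
    and s: "s < 0" and R: "\<forall>x\<in>#R. 0 < x"
    using char_poly_bip_quotient_split[of "card A" "card B"] cards by auto
  have cls: "edge_class A e i < 4" for i by (simp add: edge_class_def)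
  have "K c \<noteq> 0" if "c < 4" for c
    using K_eq[OF that] cards that by (auto simp: numeral_eq_Suc less_Suc_eq)
  then have "char_poly (seidel_matrix (m + n) (complete_bip3_edges m n - {e}))
      = (\<Prod>c<4. [:w c c, 1:] ^ (K c - 1)) * char_poly (quotient_mat 4 (\<lambda>d. of_nat (K d)) w)"
    unfolding seidel_matrix_complete_bip3_remove_edge[OF parts e] K_def w_def
    by (intro char_poly_class_mat cls) (simp add: K_def)
  also have "quotient_mat 4 (\<lambda>d. of_nat (K d)) w = bip_quotient (card A) (card B)"
    using K_eq cards unfolding bip_quotient_def quotient_mat_def w_def
    by (intro eq_matI) (auto simp: numeral_eq_Suc less_Suc_eq of_nat_diff)
  also note split
  also have "(\<Prod>c<4. [:w c c, 1:] ^ (K c - 1)) = (\<Prod>x\<in>#D. [:-x, 1:])"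
    using prod_power_linear_factors[of "{..<4}" "\<lambda>c. - w c c"] by (simp add: D_def)
  finally have "char_poly (seidel_matrix (m + n) (complete_bip3_edges m n - {e})) = [:-s, 1:] * (\<Prod>x\<in>#D + R. [:-x, 1:])"
    by (simp add: mult_ac del: mult_pCons_left)
  moreover have "\<forall>x\<in>#D. 0 < x"
    using cards bip_weight_diag_neg by (auto simp: D_def w_def set_mset_sum)
  ultimately show ?thesis using s R by (intro exI[of _ s] exI[of _ "D + R"]) auto
qed

theorem lemma2p10:
  fixes m n :: nat and e :: "nat set"
  assumes "m \<ge> 3" and "n \<ge> 3"
    and "e \<in> complete_bip3_edges m n"
  shows "\<exists>l rest. seidel_eigenvalues (m + n) (complete_bip3_edges m n - {e}) = add_mset l rest
           \<and> l \<in> \<real> \<and> Re l < 0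
           \<and> (\<forall>x \<in># rest. x \<in> \<real> \<and> Re x > 0)"
proof -
  let ?S = "seidel_matrix (m + n) (complete_bip3_edges m n - {e})"
  obtain s R where char_poly: "char_poly ?S = [:-s, 1:] * (\<Prod>x\<in>#R. [:-x, 1:])"
    and "s < 0" and "\<forall>x\<in>#R. 0 < x"
    using char_poly_seidel_complete_bip3_remove_edge[OF assms] by blast
  have carrier: "?S \<in> carrier_mat (m + n) (m + n)" by (simp add: seidel_matrix_def)
  have "seidel_eigenvalues (m + n) (complete_bip3_edges m n - {e}) = image_mset complex_of_real (add_mset s R)"
    unfolding seidel_eigenvalues_def of_real_hom.char_poly_hom[OF carrier] char_poly
    using proots_of_real_prod_linear_factors[of "add_mset s R"] by (simp del: mult_pCons_left)
  then show ?thesis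
    using \<open>s < 0\<close> \<open>\<forall>x\<in>#R. 0 < x\<close> by (intro exI[of _ "of_real s"] exI[of _ "image_mset of_real R"]) auto
qed

end
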